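(* Consider a decoder with center-convex decision regions operating in an additive noise channel $\mathbf r=\mathbf s+\sigma_0\boldsymbol\eta$ of arbitrary noise density, described in spherical coordinates by the joint density $f(r,\boldsymbol\theta)$ of the normalized noise amplitude $r=|\boldsymbol\eta|$ and the angles $\boldsymbol\theta$, and let $A=1/\sigma_0$. Then the average symbol error rate satisfies $P_e''(A)\ge0$ for all $A\in[A_1,A_2]$ provided $\partial f(r,\boldsymbol\theta)/\partial r\le0$ for all $\boldsymbol\theta$ and all $r\in[A_1d_{\min},A_2d_{\max}]$.
   Context: Setting: $\mathbf s\in\{\mathbf s_1,\dots,\mathbf s_M\}\subset\mathbb R^n$ with priors $\pi_k$; $\boldsymbol\eta$ is the normalized noise with a fixed distribution independent of $\mathbf s$, and $(r,\boldsymbol\theta)$ are its standard $n$-dimensional spherical coordinates; $f(r,\boldsymbol\theta)$ is differentiable in $r$. The decoder has pairwise disjoint decision regions $\Omega_k$ independent of $A$ (output $\mathbf s_k$ if $\mathbf r\in\Omega_k$, error if in none); $\Omega_k$ is center-convex if for every $\mathbf x\in\Omega_k$ the segment from $\mathbf s_k$ to $\mathbf x$ lies in $\Omega_k$. $P_e=\sum_k\pi_k(1-\Pr[\mathbf r\in\Omega_k\mid\mathbf s=\mathbf s_k])$. $d_{\min}$ ($d_{\max}$) is the minimum over $k$ of the minimum distance (maximum over $k$ of the maximum distance) from $\mathbf s_k$ to the boundary of $\Omega_k$. The noise need not be i.i.d. across dimensions. *)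

theory Defs
  imports "HOL-Analysis.Analysis" "HOL-Probability.Probability"
begin

text \<open>Euclidean n-space is modelled as real^'n where the index type 'n is finite
  and well-ordered; the order fixes the numbering x_1,...,x_n of the coordinates.\<close>

definition coord_pos :: "'n::{finite,wellorder} \<Rightarrow> nat" where
  "coord_pos i = card {j. j < i}"

text \<open>Standard n-dimensional spherical coordinates (n = CARD('n) >= 2), 0-based:
  angles theta_0..theta_(n-2);
  x_j = r * sin theta_0 * ... * sin theta_(j-1) * cos theta_j   for j < n-1,
  x_(n-1) = r * sin theta_0 * ... * sin theta_(n-2).\<close>

definition sph :: "real \<Rightarrow> (nat \<Rightarrow> real) \<Rightarrow> real ^ 'n::{finite,wellorder}" where
  "sph r \<theta> = (\<chi> i. let j = coord_pos i in
      r * (\<Prod>l<j. sin (\<theta> l)) * (if j = CARD('n) - 1 then 1 else cos (\<theta> j)))"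

definition sph_angles :: "nat \<Rightarrow> (nat \<Rightarrow> real) set" where
  "sph_angles n = {\<theta> \<in> PiE {..<n - 1} (\<lambda>_. UNIV).
      (\<forall>l < n - 2. 0 \<le> \<theta> l \<and> \<theta> l \<le> pi) \<and> 0 \<le> \<theta> (n - 2) \<and> \<theta> (n - 2) < 2 * pi}"

definition sph_space :: "nat \<Rightarrow> (real \<times> (nat \<Rightarrow> real)) measure" where
  "sph_space n = lborel \<Otimes>\<^sub>M PiM {..<n - 1} (\<lambda>_. lborel)"

definition sph_dom :: "nat \<Rightarrow> (real \<times> (nat \<Rightarrow> real)) set" where
  "sph_dom n = {0<..} \<times> sph_angles n"

text \<open>Distribution of the normalized noise eta whose spherical coordinates (r, theta)
  have joint density f(r, theta).\<close>

definition noise_distr :: "(real \<Rightarrow> (nat \<Rightarrow> real) \<Rightarrow> real) \<Rightarrow> (real ^ 'n::{finite,wellorder}) measure" where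
  "noise_distr f = distr
     (density (sph_space CARD('n))
        (\<lambda>(r, \<theta>). ennreal (f r \<theta>) * indicator (sph_dom CARD('n)) (r, \<theta>)))
     borel (\<lambda>(r, \<theta>). sph r \<theta>)"

definition center_convex :: "'a::real_vector \<Rightarrow> 'a set \<Rightarrow> bool" where
  "center_convex c \<Omega> \<longleftrightarrow> (\<forall>x\<in>\<Omega>. closed_segment c x \<subseteq> \<Omega>)"

text \<open>Average symbol error rate as a function of A = 1/sigma_0, for the channel
  r = s + sigma_0 eta: symbols s 0..s (M-1), priors p, regions Om.\<close>

definition sym_err_rate ::
  "nat \<Rightarrow> (nat \<Rightarrow> real) \<Rightarrow> (nat \<Rightarrow> 'a::euclidean_space) \<Rightarrow> (nat \<Rightarrow> 'a set) \<Rightarrow> 'a measure \<Rightarrow> real \<Rightarrow> real" where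
  "sym_err_rate M p s Om N A =
     (\<Sum>k<M. p k * (1 - measure N {x \<in> space N. s k + (1 / A) *\<^sub>R x \<in> Om k}))"

text \<open>d_min: minimum over k of the distance from s_k to the boundary of Omega_k
  (regions with empty boundary impose no constraint); d_max: maximum over k of the
  supremum of distances from s_k to boundary points (possibly infinite).\<close>

definition d_min :: "nat \<Rightarrow> (nat \<Rightarrow> 'a::euclidean_space) \<Rightarrow> (nat \<Rightarrow> 'a set) \<Rightarrow> ereal" where
  "d_min M s Om = (INF k\<in>{k. k < M \<and> frontier (Om k) \<noteq> {}}. ereal (infdist (s k) (frontier (Om k))))"

definition d_max :: "nat \<Rightarrow> (nat \<Rightarrow> 'a::euclidean_space) \<Rightarrow> (nat \<Rightarrow> 'a set) \<Rightarrow> ereal" where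
  "d_max M s Om = (SUP k\<in>{..<M}. SUP b\<in>frontier (Om k). ereal (dist (s k) b))"

end

theory Submission
  imports Defs
begin

text \<open>Pass to spherical coordinates around a symbol s_k. On the ray from s_k in a fixed
  direction u, center-convexity makes the region an initial segment: the ray lies in it up to
  some R with s_k + R u on the boundary, so for A = 1/sigma_0 the ray contributes the integral
  of f(r, theta) over 0 < r < A R. Since d_min <= R <= d_max, the density is nonincreasing on
  [A_1 R, A_2 R], and the integral of a nonincreasing function is concave in its upper limit.
  Integrating over the angles, every success probability is concave in A on [A_1, A_2], hence
  P_e is convex there, and the derivative of a differentiable convex function is nondecreasing.\<close>

lemma concave_on_Icc_three_pointI:
  fixes g :: "real \<Rightarrow> real"
  assumes three_point: "\<And>x y z. a \<le> x \<Longrightarrow> x < y \<Longrightarrow> y < z \<Longrightarrow> z \<le> b \<Longrightarrow>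
      (z - y) * g x + (y - x) * g z \<le> (z - x) * g y"
  shows "concave_on {a..b} g"
proof (rule concave_on_linorderI)
  fix t x y :: real
  assume t: "0 < t" "t < 1" and xy: "x \<in> {a..b}" "y \<in> {a..b}" "x < y"
  define w where "w = (1 - t) * x + t * y"
  have "y - w = (1 - t) * (y - x)" "w - x = t * (y - x)" by (simp_all add: w_def algebra_simps)
  moreover have "0 < (1 - t) * (y - x)" "0 < t * (y - x)" using t xy by simp_all
  ultimately have "x < w" "w < y" by linarith+
  then have "(y - w) * g x + (w - x) * g y \<le> (y - x) * g w"
    using three_point[of x w y] xy by simp
  then have "(y - x) * ((1 - t) * g x + t * g y) \<le> (y - x) * g w"
    unfolding \<open>y - w = _\<close> \<open>w - x = _\<close> by (simp add: algebra_simps)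
  then show "(1 - t) * g x + t * g y \<le> g ((1 - t) *\<^sub>R x + t *\<^sub>R y)"
    using xy by (simp add: w_def)
qed simp

lemma convex_on_deriv_mono:
  fixes f :: "real \<Rightarrow> real"
  assumes f: "convex_on I f" and xy: "x \<in> I" "y \<in> I" "x < y"
    and dx: "(f has_real_derivative dx) (at x)" and dy: "(f has_real_derivative dy) (at y)"
  shows "dx \<le> dy"
proof -
  define \<sigma> where "\<sigma> = (f y - f x) / (y - x)"
  have "{x..y} \<subseteq> I"
    using atMostAtLeast_subset_convex[OF convex_on_imp_convex[OF f] xy] .
  then have "convex_on {x..y} f" by (rule convex_on_subset[OF f]) simp
  have chord: "f t - f x \<le> \<sigma> * (t - x)" if "t \<in> {x..y}" for t
    using convex_onD_Icc'[OF \<open>convex_on {x..y} f\<close> that] unfolding \<sigma>_def by simp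
  have "dx \<le> \<sigma>"
  proof (rule tendsto_upperbound)
    show "((\<lambda>t. (f t - f x) / (t - x)) \<longlongrightarrow> dx) (at_right x)"
      using dx unfolding has_field_derivative_iff by (rule tendsto_mono[OF at_le, rotated]) simp
    show "\<forall>\<^sub>F t in at_right x. (f t - f x) / (t - x) \<le> \<sigma>"
      using eventually_at_right_real[OF \<open>x < y\<close>]
      by eventually_elim (use chord in \<open>auto simp: divide_le_eq\<close>)
  qed simp
  also have "\<sigma> \<le> dy"
  proof (rule tendsto_lowerbound)
    show "((\<lambda>t. (f t - f y) / (t - y)) \<longlongrightarrow> dy) (at_left y)"
      using dy unfolding has_field_derivative_iff by (rule tendsto_mono[OF at_le, rotated]) simp
    show "\<forall>\<^sub>F t in at_left y. \<sigma> \<le> (f t - f y) / (t - y)"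
      using eventually_at_left_real[OF \<open>x < y\<close>]
    proof eventually_elim
      case (elim t)
      have "f t - f y \<le> \<sigma> * (t - y)"
        using chord[of t] elim \<open>x < y\<close> by (simp add: \<sigma>_def field_simps)
      then show ?case using elim by (simp add: le_divide_eq)
    qed
  qed simp
  finally show ?thesis .
qed

lemma convex_on_second_deriv_nonneg:
  fixes f f1 :: "real \<Rightarrow> real"
  assumes f: "convex_on {a..b} f" and "a < b" "c \<in> {a..b}"
    and f1: "\<forall>\<^sub>F x in nhds c. (f has_real_derivative f1 x) (at x)"
    and D: "(f1 has_real_derivative D) (at c)"
  shows "0 \<le> D"
proof (rule tendsto_lowerbound)
  show "((\<lambda>x. (f1 x - f1 c) / (x - c)) \<longlongrightarrow> D) (at c within {a..b})"
    using has_field_derivative_at_within[OF D] by (simp add: has_field_derivative_iff)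
  show "at c within {a..b} \<noteq> bot"
    using \<open>a < b\<close> \<open>c \<in> {a..b}\<close> by (simp add: trivial_limit_within)
  have d_c: "(f has_real_derivative f1 c) (at c)" using f1 by (rule eventually_nhds_x_imp_x)
  show "\<forall>\<^sub>F x in at c within {a..b}. 0 \<le> (f1 x - f1 c) / (x - c)"
    unfolding eventually_at_filter using f1
  proof eventually_elim
    case (elim x)
    show ?case
    proof (intro impI)
      assume "x \<noteq> c" "x \<in> {a..b}"
      then consider "c < x" | "x < c" by linarith
      then show "0 \<le> (f1 x - f1 c) / (x - c)"
      proof cases
        case 1
        then have "f1 c \<le> f1 x"
          using convex_on_deriv_mono[OF f \<open>c \<in> {a..b}\<close> \<open>x \<in> {a..b}\<close>] elim d_c by blast
        with 1 show ?thesis by simp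
      next
        case 2
        then have "f1 x \<le> f1 c"
          using convex_on_deriv_mono[OF f \<open>x \<in> {a..b}\<close> \<open>c \<in> {a..b}\<close>] elim d_c by blast
        with 2 show ?thesis by (simp add: divide_nonpos_neg)
      qed
    qed
  qed
qed

lemma concave_on_sum_weighted:
  fixes g :: "'k \<Rightarrow> real \<Rightarrow> real"
  assumes "convex S" "\<And>k. k \<in> K \<Longrightarrow> 0 \<le> p k" "\<And>k. k \<in> K \<Longrightarrow> concave_on S (g k)"
  shows "concave_on S (\<lambda>x. \<Sum>k\<in>K. p k * g k x)"
  using assms(2,3)
proof (induction K rule: infinite_finite_induct)
  case (insert k K)
  then show ?case by (simp add: concave_on_add concave_on_cmul)
qed (simp_all add: concave_on_const \<open>convex S\<close>)

lemma coord_pos_strict_mono: "strict_mono (coord_pos :: 'n::{finite,wellorder} \<Rightarrow> nat)"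
proof (rule strict_monoI)
  fix i j :: 'n assume "i < j"
  then have "{k. k < i} \<subset> {k. k < j}" by auto
  then show "coord_pos i < coord_pos j" unfolding coord_pos_def by (simp add: psubset_card_mono)
qed

lemma coord_pos_less_card: "coord_pos (i::'n::{finite,wellorder}) < CARD('n)"
  unfolding coord_pos_def by (rule psubset_card_mono) auto

lemma bij_betw_coord_pos: "bij_betw (coord_pos :: 'n::{finite,wellorder} \<Rightarrow> nat) UNIV {..<CARD('n)}"
proof -
  have "inj (coord_pos :: 'n \<Rightarrow> nat)"
    using coord_pos_strict_mono by (rule strict_mono_imp_inj_on)
  moreover have "coord_pos ` (UNIV :: 'n set) = {..<CARD('n)}"
    using card_image[OF \<open>inj coord_pos\<close>] coord_pos_less_card
    by (intro card_subset_eq) auto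
  ultimately show ?thesis by (simp add: bij_betw_def)
qed

lemma sph_scale: "sph r \<theta> = r *\<^sub>R (sph 1 \<theta> :: real ^ 'n::{finite,wellorder})"
  by (simp add: sph_def vec_eq_iff Let_def)

lemma sum_sin_cos_prod_telescope:
  fixes m :: nat and \<theta> :: "nat \<Rightarrow> real"
  shows "(\<Sum>j<m. (\<Prod>l<j. (sin (\<theta> l))\<^sup>2) * (cos (\<theta> j))\<^sup>2) + (\<Prod>l<m. (sin (\<theta> l))\<^sup>2) = 1"
proof (induction m)
  case (Suc m)
  have "(\<Prod>l<m. (sin (\<theta> l))\<^sup>2) * (cos (\<theta> m))\<^sup>2 + (\<Prod>l<m. (sin (\<theta> l))\<^sup>2) * (sin (\<theta> m))\<^sup>2
      = (\<Prod>l<m. (sin (\<theta> l))\<^sup>2)"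
    by (simp flip: distrib_left)
  with Suc show ?case by simp
qed simp

lemma norm_sph_1:
  assumes "CARD('n::{finite,wellorder}) \<ge> 2"
  shows "norm (sph 1 \<theta> :: real ^ 'n::{finite,wellorder}) = 1"
proof -
  let ?n = "CARD('n)"
  define c where "c j = (\<Prod>l<j. sin (\<theta> l)) * (if j = ?n - 1 then 1 else cos (\<theta> j))" for j
  have "(norm (sph 1 \<theta> :: real ^ 'n::{finite,wellorder}))\<^sup>2 = (\<Sum>i\<in>UNIV. (c (coord_pos (i::'n::{finite,wellorder})))\<^sup>2)"
    by (simp add: norm_vec_def L2_set_def sum_nonneg sph_def c_def Let_def)
  also have "\<dots> = (\<Sum>j<?n. (c j)\<^sup>2)"
    using bij_betw_coord_pos by (rule sum.reindex_bij_betw)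
  also have "\<dots> = (\<Sum>j<?n - 1. (c j)\<^sup>2) + (c (?n - 1))\<^sup>2"
  proof -
    from assms have "?n = Suc (?n - 1)" by simp
    then show ?thesis by (metis sum.lessThan_Suc diff_Suc_1)
  qed
  also have "\<dots> = (\<Sum>j<?n - 1. (\<Prod>l<j. (sin (\<theta> l))\<^sup>2) * (cos (\<theta> j))\<^sup>2) + (\<Prod>l<?n - 1. (sin (\<theta> l))\<^sup>2)"
    by (simp add: c_def power_mult_distrib prod_power_distrib)
  also have "\<dots> = 1" by (rule sum_sin_cos_prod_telescope)
  finally show ?thesis
    using norm_ge_zero power2_eq_1_iff by (smt (verit))
qed

lemma sph_angles_eq_PiE:
  assumes "n \<ge> 2"
  shows "sph_angles n = PiE {..<n - 1} (\<lambda>l. if l < n - 2 then {0..pi} else {0..<2*pi})"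
    (is "_ = PiE ?I ?J")
proof (rule set_eqI)
  fix \<theta> :: "nat \<Rightarrow> real"
  have "?I = insert (n - 2) {..<n - 2}" using assms by auto
  then have "(\<forall>l\<in>?I. \<theta> l \<in> ?J l) \<longleftrightarrow>
      (\<forall>l<n - 2. 0 \<le> \<theta> l \<and> \<theta> l \<le> pi) \<and> 0 \<le> \<theta> (n - 2) \<and> \<theta> (n - 2) < 2 * pi"
    by auto
  then show "\<theta> \<in> sph_angles n \<longleftrightarrow> \<theta> \<in> PiE ?I ?J"
    unfolding sph_angles_def PiE_iff by (simp add: conj_ac)
qed

lemma sets_sph_angles: "n \<ge> 2 \<Longrightarrow> sph_angles n \<in> sets (PiM {..<n - 1} (\<lambda>_. lborel))"
  by (auto simp: sph_angles_eq_PiE intro!: sets_PiM_I_finite)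

lemma sets_sph_dom: "n \<ge> 2 \<Longrightarrow> sph_dom n \<in> sets (sph_space n)"
  unfolding sph_dom_def sph_space_def by (intro pair_measureI sets_sph_angles) auto

lemma measurable_sph_angle: "l < n - 1 \<Longrightarrow> (\<lambda>z. snd z l) \<in> borel_measurable (sph_space n)"
  unfolding sph_space_def by simp

lemma measurable_sph:
  "(\<lambda>(r, \<theta>). sph r \<theta> :: real ^ 'n::{finite,wellorder}) \<in> borel_measurable (sph_space CARD('n))"
proof -
  let ?n = "CARD('n::{finite,wellorder})"
  have "(\<lambda>z. (sph (fst z) (snd z) :: real ^ 'n::{finite,wellorder}) $ i) \<in> borel_measurable (sph_space ?n)"
    for i
  proof -
    define j where "j = coord_pos i"
    have "j < ?n" using coord_pos_less_card j_def by auto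
    then have "(\<lambda>z. \<Prod>l<j. sin (snd z l)) \<in> borel_measurable (sph_space ?n)"
      by (auto intro!: borel_measurable_prod measurable_compose[OF measurable_sph_angle])
    moreover have "(\<lambda>z. if j = ?n - 1 then 1 else cos (snd z j)) \<in> borel_measurable (sph_space ?n)"
      using \<open>j < ?n\<close> by (cases "j = ?n - 1") (auto intro!: measurable_compose[OF measurable_sph_angle])
    moreover have "fst \<in> borel_measurable (sph_space ?n)" unfolding sph_space_def by simp
    moreover have "(\<lambda>z. (sph (fst z) (snd z) :: real ^ 'n::{finite,wellorder}) $ i) =
        (\<lambda>z. fst z * (\<Prod>l<j. sin (snd z l)) * (if j = ?n - 1 then 1 else cos (snd z j)))"
      unfolding j_def by (simp add: sph_def Let_def)
    ultimately show ?thesis by (auto intro!: borel_measurable_times)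
  qed
  then show ?thesis
    unfolding borel_measurable_euclidean_space[where 'c="real ^ 'n::{finite,wellorder}"]
    by (auto simp: Basis_vec_def inner_axis case_prod_beta)
qed

lemma center_convex_ray_shrink:
  assumes "center_convex s Om" "s + t *\<^sub>R u \<in> Om" "0 \<le> t'" "t' \<le> t"
  shows "s + t' *\<^sub>R u \<in> Om"
proof (cases "t = 0")
  case False
  then have "s + t' *\<^sub>R u = (1 - t' / t) *\<^sub>R s + (t' / t) *\<^sub>R (s + t *\<^sub>R u)"
    by (simp add: algebra_simps)
  moreover have "0 \<le> t' / t" "t' / t \<le> 1" using assms(3,4) False by auto
  ultimately have "s + t' *\<^sub>R u \<in> closed_segment s (s + t *\<^sub>R u)"
    unfolding closed_segment_def by blast
  then show ?thesis using assms(1,2) unfolding center_convex_def by blast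
qed (use assms in auto)

lemma center_convex_ray_cases:
  fixes s u :: "'a::real_normed_vector"
  assumes cc: "center_convex s Om" and u: "norm u = 1"
  obtains (inside) "\<And>t. 0 < t \<Longrightarrow> s + t *\<^sub>R u \<in> Om"
  | (outside) "\<And>t. 0 < t \<Longrightarrow> s + t *\<^sub>R u \<notin> Om"
  | (exit) R where "0 < R" "s + R *\<^sub>R u \<in> frontier Om"
      "\<And>t. 0 < t \<Longrightarrow> t < R \<Longrightarrow> s + t *\<^sub>R u \<in> Om" "\<And>t. R < t \<Longrightarrow> s + t *\<^sub>R u \<notin> Om"
proof -
  define S where "S = {t. 0 < t \<and> s + t *\<^sub>R u \<in> Om}"
  have down: "t \<in> S \<Longrightarrow> 0 < t' \<Longrightarrow> t' \<le> t \<Longrightarrow> t' \<in> S" for t t'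
    using center_convex_ray_shrink[OF cc] unfolding S_def by auto
  consider "\<forall>t>0. t \<in> S" | "S = {}" | t0 t1 where "0 < t0" "t0 \<notin> S" "t1 \<in> S"
    by blast
  then show ?thesis
  proof cases
    case 1
    then show ?thesis using inside unfolding S_def by blast
  next
    case 2
    then show ?thesis using outside unfolding S_def by blast
  next
    case 3
    have "t < t0" if "t \<in> S" for t
      using down[OF that, of t0] 3 by force
    then have bdd: "bdd_above S" by (meson bdd_aboveI less_imp_le)
    have "S \<noteq> {}" using 3 by blast
    define R where "R = Sup S"
    have "0 < t1" using 3 S_def by auto
    also have "t1 \<le> R" unfolding R_def using bdd 3 by (simp add: cSup_upper)
    finally have "0 < R" .
    have below: "t \<in> S" if "0 < t" "t < R" for t
    proof -
      obtain t' where "t' \<in> S" "t < t'"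
        using less_cSup_iff[OF \<open>S \<noteq> {}\<close> bdd] \<open>t < R\<close> unfolding R_def by blast
      then show ?thesis using down \<open>0 < t\<close> by auto
    qed
    have above: "R < t \<Longrightarrow> t \<notin> S" for t
      using cSup_upper[OF _ bdd] unfolding R_def by force
    have "s + R *\<^sub>R u \<in> closure Om"
    proof (rule closure_approachable[THEN iffD2], intro allI impI)
      fix e :: real assume "e > 0"
      define t where "t = max (R / 2) (R - e / 2)"
      have "s + t *\<^sub>R u \<in> Om" using below[of t] \<open>0 < R\<close> \<open>e > 0\<close> by (auto simp: S_def t_def)
      moreover have "dist (s + t *\<^sub>R u) (s + R *\<^sub>R u) < e"
        using \<open>0 < R\<close> \<open>e > 0\<close> u by (auto simp: dist_norm t_def simp flip: scaleR_diff_left)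
      ultimately show "\<exists>x\<in>Om. dist x (s + R *\<^sub>R u) < e" by blast
    qed
    moreover have "s + R *\<^sub>R u \<notin> interior Om"
    proof
      assume "s + R *\<^sub>R u \<in> interior Om"
      then obtain e where "e > 0" "ball (s + R *\<^sub>R u) e \<subseteq> Om" by (meson mem_interior)
      moreover have "s + (R + e / 2) *\<^sub>R u \<in> ball (s + R *\<^sub>R u) e"
        using \<open>e > 0\<close> u by (auto simp: dist_norm algebra_simps)
      ultimately have "R + e / 2 \<in> S" using \<open>0 < R\<close> unfolding S_def by auto
      with above[of "R + e / 2"] \<open>e > 0\<close> show False by simp
    qed
    ultimately have "s + R *\<^sub>R u \<in> frontier Om" by (simp add: frontier_def)
    moreover have "0 < t \<Longrightarrow> t < R \<Longrightarrow> s + t *\<^sub>R u \<in> Om" for t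
      using below unfolding S_def by blast
    moreover have "R < t \<Longrightarrow> s + t *\<^sub>R u \<notin> Om" for t
      using above \<open>0 < R\<close> unfolding S_def by auto
    ultimately show ?thesis using exit \<open>0 < R\<close> by blast
  qed
qed

lemma nn_integral_Ioo_split:
  fixes \<phi> :: "real \<Rightarrow> real"
  assumes "\<phi> \<in> borel_measurable lborel" "0 < a" "a \<le> b"
  shows "(\<integral>\<^sup>+ r. ennreal (\<phi> r) * indicator {0<..<b} r \<partial>lborel) =
    (\<integral>\<^sup>+ r. ennreal (\<phi> r) * indicator {0<..<a} r \<partial>lborel) +
    (\<integral>\<^sup>+ r. ennreal (\<phi> r) * indicator {a..<b} r \<partial>lborel)"
proof -
  have "(\<integral>\<^sup>+ r. ennreal (\<phi> r) * indicator {0<..<b} r \<partial>lborel) =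
      (\<integral>\<^sup>+ r. ennreal (\<phi> r) * indicator {0<..<a} r + ennreal (\<phi> r) * indicator {a..<b} r \<partial>lborel)"
    using assms by (intro nn_integral_cong) (auto simp: indicator_def)
  also have "\<dots> = (\<integral>\<^sup>+ r. ennreal (\<phi> r) * indicator {0<..<a} r \<partial>lborel) +
      (\<integral>\<^sup>+ r. ennreal (\<phi> r) * indicator {a..<b} r \<partial>lborel)"
    using assms by (intro nn_integral_add) auto
  finally show ?thesis .
qed

lemma nn_integral_Ioo_antimono_three_point:
  fixes \<phi> :: "real \<Rightarrow> real"
  assumes \<phi>: "\<phi> \<in> borel_measurable lborel" and abc: "0 < a" "a < b" "b < c"
    and anti: "antimono_on {a..c} \<phi>"
  defines "G x \<equiv> \<integral>\<^sup>+ r. ennreal (\<phi> r) * indicator {0<..<x} r \<partial>lborel"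
  shows "ennreal (c - b) * G a + ennreal (b - a) * G c \<le> ennreal (c - a) * G b"
proof -
  define Y where "Y = (\<integral>\<^sup>+ r. ennreal (\<phi> r) * indicator {a..<b} r \<partial>lborel)"
  define Z where "Z = (\<integral>\<^sup>+ r. ennreal (\<phi> r) * indicator {b..<c} r \<partial>lborel)"
  have GB: "G b = G a + Y"
    unfolding G_def Y_def by (rule nn_integral_Ioo_split[OF \<phi>]) (use abc in auto)
  have "G c = G b + Z"
    unfolding G_def Z_def by (rule nn_integral_Ioo_split[OF \<phi>]) (use abc in auto)
  then have GC: "G c = G a + Y + Z" by (simp add: GB)
  \<comment> \<open>Compare both increments with the value at b: the density is above it on [a,b), below on [b,c).\<close>
  define m where "m = ennreal (\<phi> b)"
  have "m * ennreal (b - a) = (\<integral>\<^sup>+ r. m * indicator {a..<b} r \<partial>lborel)"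
    using abc by (simp add: nn_integral_cmult_indicator)
  also have "\<dots> \<le> Y" unfolding Y_def m_def
    using abc by (intro nn_integral_mono) (auto simp: indicator_def intro!: ennreal_leI monotone_onD[OF anti])
  finally have Y: "m * ennreal (b - a) \<le> Y" .
  have "Z \<le> (\<integral>\<^sup>+ r. m * indicator {b..<c} r \<partial>lborel)" unfolding Z_def m_def
    using abc by (intro nn_integral_mono) (auto simp: indicator_def intro!: ennreal_leI monotone_onD[OF anti])
  also have "\<dots> = m * ennreal (c - b)"
    using abc by (simp add: nn_integral_cmult_indicator)
  finally have Z: "Z \<le> m * ennreal (c - b)" .
  have "ennreal (b - a) * Z \<le> ennreal (c - b) * Y"
  proof -
    have "ennreal (b - a) * Z \<le> ennreal (c - b) * (m * ennreal (b - a))"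
      using mult_left_mono[OF Z, of "ennreal (b - a)"] by (simp add: ac_simps)
    also have "\<dots> \<le> ennreal (c - b) * Y" using Y by (intro mult_left_mono) auto
    finally show ?thesis .
  qed
  moreover have "ennreal (c - a) = ennreal (c - b) + ennreal (b - a)"
    using abc by (simp flip: ennreal_plus)
  ultimately show ?thesis
    unfolding GB GC by (simp add: algebra_simps add_left_mono)
qed

lemma antimono_on_scaled_Icc:
  fixes \<phi> \<phi>' :: "real \<Rightarrow> real" and dmin dmax :: ereal
  assumes der: "\<And>r. 0 < r \<Longrightarrow> (\<phi> has_real_derivative \<phi>' r) (at r)"
    and dec: "\<And>r. 0 < r \<Longrightarrow> ereal La * dmin \<le> ereal r \<Longrightarrow> ereal r \<le> ereal Ua * dmax \<Longrightarrow> \<phi>' r \<le> 0"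
    and R: "dmin \<le> ereal R" "ereal R \<le> dmax" "0 < R" and "0 < La" "0 \<le> Ua"
  shows "antimono_on {La * R..Ua * R} \<phi>"
proof (rule monotone_onI)
  fix x y assume xy: "x \<in> {La * R..Ua * R}" "y \<in> {La * R..Ua * R}" "x \<le> y"
  show "\<phi> y \<le> \<phi> x"
  proof (rule DERIV_nonpos_imp_nonincreasing[OF \<open>x \<le> y\<close>])
    fix z assume z: "x \<le> z" "z \<le> y"
    have "0 < La * R" using \<open>0 < La\<close> R by simp
    then have "0 < z" using xy z by auto
    have "ereal La * dmin \<le> ereal La * ereal R"
      using R \<open>0 < La\<close> by (intro ereal_mult_left_mono) auto
    also have "\<dots> \<le> ereal z" using xy z by simp
    finally have "ereal La * dmin \<le> ereal z" .
    moreover have "ereal z \<le> ereal Ua * ereal R" using xy z by simp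
    moreover have "ereal Ua * ereal R \<le> ereal Ua * dmax"
      using R \<open>0 \<le> Ua\<close> by (intro ereal_mult_left_mono) auto
    ultimately have "\<phi>' z \<le> 0" using dec \<open>0 < z\<close> by (meson order.trans)
    then show "\<exists>d. (\<phi> has_real_derivative d) (at z) \<and> d \<le> 0"
      using der \<open>0 < z\<close> by blast
  qed
qed

definition ray_mass :: "'a::real_vector \<Rightarrow> 'a \<Rightarrow> 'a set \<Rightarrow> (real \<Rightarrow> real) \<Rightarrow> real \<Rightarrow> ennreal" where
  "ray_mass s u Om \<phi> X = (\<integral>\<^sup>+ r. ennreal (\<phi> r) * indicator {r. 0 < r \<and> s + (r / X) *\<^sub>R u \<in> Om} r \<partial>lborel)"

lemma ray_mass_three_point:
  fixes s u :: "'a::real_normed_vector"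
  assumes u: "norm u = 1" and cc: "center_convex s Om" and \<phi>: "\<phi> \<in> borel_measurable lborel"
    and anti: "\<And>R. 0 < R \<Longrightarrow> s + R *\<^sub>R u \<in> frontier Om \<Longrightarrow> antimono_on {La * R..Ua * R} \<phi>"
    and ABC: "0 < La" "La \<le> A" "A < B" "B < C" "C \<le> Ua"
  shows "ennreal (C - B) * ray_mass s u Om \<phi> A + ennreal (B - A) * ray_mass s u Om \<phi> C
    \<le> ennreal (C - A) * ray_mass s u Om \<phi> B"
proof -
  have pos: "0 < A" "0 < B" "0 < C" using ABC by auto
  have CA: "ennreal (C - A) = ennreal (C - B) + ennreal (B - A)"
    using ABC by (simp flip: ennreal_plus)
  have scaled: "r / X < t \<longleftrightarrow> r < X * t" "t < r / X \<longleftrightarrow> X * t < r" if "0 < X" for r X t :: real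
    using that by (auto simp: field_simps)
  from cc u show ?thesis
  proof (cases rule: center_convex_ray_cases)
    case inside
    have "ray_mass s u Om \<phi> X = (\<integral>\<^sup>+ r. ennreal (\<phi> r) * indicator {0<..} r \<partial>lborel)" if "0 < X" for X
      unfolding ray_mass_def using inside that by (intro nn_integral_cong) (auto simp: indicator_def)
    then show ?thesis using pos by (simp add: CA distrib_right)
  next
    case outside
    have "ray_mass s u Om \<phi> X = 0" if "0 < X" for X
    proof -
      have "{r. 0 < r \<and> s + (r / X) *\<^sub>R u \<in> Om} = {}" using outside that by auto
      then show ?thesis by (simp add: ray_mass_def)
    qed
    then show ?thesis using pos by simp
  next
    case (exit R)
    \<comment> \<open>Up to the null set {X R}, the ray meets the scaled region in the interval (0, X R).\<close>
    have G: "ray_mass s u Om \<phi> X = (\<integral>\<^sup>+ r. ennreal (\<phi> r) * indicator {0<..<X * R} r \<partial>lborel)"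
      if "0 < X" for X
      unfolding ray_mass_def
    proof (rule nn_integral_cong_AE)
      show "AE r in lborel. ennreal (\<phi> r) * indicator {r. 0 < r \<and> s + (r / X) *\<^sub>R u \<in> Om} r =
          ennreal (\<phi> r) * indicator {0<..<X * R} r"
        using AE_lborel_singleton[of "X * R"]
      proof eventually_elim
        case (elim r)
        then have "0 < r \<Longrightarrow> s + (r / X) *\<^sub>R u \<in> Om \<longleftrightarrow> r < X * R"
          using exit(3)[of "r / X"] exit(4)[of "r / X"] scaled[OF that] that
          by (metis divide_pos_pos linorder_neqE_linordered_idom order.asym)
        then show ?case by (auto simp: indicator_def)
      qed
    qed
    have "ennreal (C * R - B * R) * ray_mass s u Om \<phi> A + ennreal (B * R - A * R) * ray_mass s u Om \<phi> C
        \<le> ennreal (C * R - A * R) * ray_mass s u Om \<phi> B"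
      unfolding G[OF pos(1)] G[OF pos(2)] G[OF pos(3)] mult.commute[of _ R]
    proof (rule nn_integral_Ioo_antimono_three_point[OF \<phi>])
      have "La * R \<le> R * A" "R * C \<le> Ua * R"
        using ABC exit(1) by (simp_all add: mult.commute)
      then have "{R * A..R * C} \<subseteq> {La * R..Ua * R}" by auto
      then show "antimono_on {R * A..R * C} \<phi>"
        by (rule monotone_on_subset[OF anti[OF exit(1,2)]])
    qed (use ABC exit(1) in auto)
    moreover have scale: "ennreal (x * R - y * R) = ennreal R * ennreal (x - y)" for x y
      using exit(1) ennreal_mult'[of R "x - y"] by (simp add: algebra_simps)
    ultimately have "ennreal R * (ennreal (C - B) * ray_mass s u Om \<phi> A + ennreal (B - A) * ray_mass s u Om \<phi> C)
        \<le> ennreal R * (ennreal (C - A) * ray_mass s u Om \<phi> B)"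
      by (simp add: distrib_left mult.assoc)
    then show ?thesis using exit(1) by (simp add: ennreal_mult_le_mult_iff)
  qed
qed

lemma pair_sigma_finite_lborel_PiM:
  "finite I \<Longrightarrow> pair_sigma_finite lborel (PiM I (\<lambda>_. lborel :: real measure))"
proof -
  assume "finite I"
  interpret product_sigma_finite "\<lambda>_. lborel :: real measure" by standard
  have "sigma_finite_measure (PiM I (\<lambda>_. lborel :: real measure))"
    using \<open>finite I\<close> by (rule sigma_finite)
  then show ?thesis by (simp add: pair_sigma_finite_def sigma_finite_lborel)
qed

lemma borel_measurable_noise_integrand:
  assumes dim: "CARD('n::{finite,wellorder}) \<ge> 2"
    and f_meas: "(\<lambda>(r, \<theta>). f r \<theta>) \<in> borel_measurable (sph_space CARD('n))"
    and E: "E \<in> sets borel"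
  shows "(\<lambda>(r, \<theta>). ennreal (f r \<theta>) * indicator (sph_dom CARD('n)) (r, \<theta>)
      * indicator E (sph r \<theta> :: real ^ 'n::{finite,wellorder})) \<in> borel_measurable (sph_space CARD('n))"
proof -
  have "(\<lambda>z. indicator E ((case z of (r, \<theta>) \<Rightarrow> sph r \<theta>) :: real ^ 'n::{finite,wellorder}) :: ennreal)
      \<in> borel_measurable (sph_space CARD('n))"
    using measurable_sph E by (intro measurable_compose[OF _ borel_measurable_indicator]) auto
  moreover have "(\<lambda>z. ennreal (case z of (r, \<theta>) \<Rightarrow> f r \<theta>)) \<in> borel_measurable (sph_space CARD('n))"
    using f_meas by (rule measurable_compose[OF _ measurable_ennreal])
  moreover have "(\<lambda>z. indicator (sph_dom CARD('n)) z :: ennreal) \<in> borel_measurable (sph_space CARD('n))"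
    using sets_sph_dom[OF dim] by (rule borel_measurable_indicator)
  ultimately show ?thesis
    unfolding case_prod_beta' by (intro borel_measurable_times_ennreal) auto
qed

lemma emeasure_noise_distr:
  assumes dim: "CARD('n::{finite,wellorder}) \<ge> 2"
    and f_meas: "(\<lambda>(r, \<theta>). f r \<theta>) \<in> borel_measurable (sph_space CARD('n))"
    and E: "E \<in> sets borel"
  shows "emeasure (noise_distr f :: (real ^ 'n::{finite,wellorder}) measure) E =
    (\<integral>\<^sup>+ (r, \<theta>). ennreal (f r \<theta>) * indicator (sph_dom CARD('n)) (r, \<theta>)
      * indicator E (sph r \<theta> :: real ^ 'n::{finite,wellorder}) \<partial>sph_space CARD('n))"
proof -
  let ?S = "sph_space CARD('n::{finite,wellorder})"
  let ?g = "\<lambda>(r, \<theta>). sph r \<theta> :: real ^ 'n::{finite,wellorder}"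
  let ?d = "\<lambda>(r, \<theta>). ennreal (f r \<theta>) * indicator (sph_dom CARD('n::{finite,wellorder})) (r, \<theta>)"
  have "?d \<in> borel_measurable ?S"
    using borel_measurable_noise_integrand[OF dim f_meas sets.top] by simp
  moreover have "?g -` E \<inter> space ?S \<in> sets ?S"
    using measurable_sph E by (rule measurable_sets)
  ultimately have "emeasure (density ?S ?d) (?g -` E \<inter> space ?S) =
      (\<integral>\<^sup>+ z. ?d z * indicator (?g -` E \<inter> space ?S) z \<partial>?S)"
    by (rule emeasure_density)
  moreover have "emeasure (noise_distr f) E = emeasure (density ?S ?d) (?g -` E \<inter> space ?S)"
    unfolding noise_distr_def using measurable_sph E by (subst emeasure_distr) auto
  ultimately show ?thesis
    by (auto intro!: nn_integral_cong simp: indicator_def)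
qed

lemma prob_space_noise_distr:
  assumes dim: "CARD('n::{finite,wellorder}) \<ge> 2"
    and f_meas: "(\<lambda>(r, \<theta>). f r \<theta>) \<in> borel_measurable (sph_space CARD('n))"
    and f_normalized: "(\<integral>\<^sup>+ (r, \<theta>). ennreal (f r \<theta>) * indicator (sph_dom CARD('n)) (r, \<theta>)
      \<partial>sph_space CARD('n)) = 1"
  shows "prob_space (noise_distr f :: (real ^ 'n::{finite,wellorder}) measure)"
proof
  have "space (noise_distr f :: (real ^ 'n::{finite,wellorder}) measure) = UNIV"
    by (simp add: noise_distr_def)
  then show "emeasure (noise_distr f :: (real ^ 'n::{finite,wellorder}) measure)
      (space (noise_distr f)) = 1"
    using f_normalized by (simp add: emeasure_noise_distr[OF dim f_meas])
qed

lemma nn_integral_noise_integrand_radial: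
  "(\<integral>\<^sup>+ r. ennreal (f r \<theta>) * indicator (sph_dom CARD('n)) (r, \<theta>)
      * indicator {x. s + (1 / X) *\<^sub>R x \<in> Om} (sph r \<theta> :: real ^ 'n::{finite,wellorder}) \<partial>lborel)
    = ray_mass s (sph 1 \<theta>) Om (\<lambda>r. f r \<theta>) X * indicator (sph_angles CARD('n)) \<theta>"
proof (cases "\<theta> \<in> sph_angles CARD('n)")
  case True
  have "(1 / X) *\<^sub>R sph r \<theta> = (r / X) *\<^sub>R (sph 1 \<theta> :: real ^ 'n::{finite,wellorder})" for r
    by (subst sph_scale) simp
  then have "(\<integral>\<^sup>+ r. ennreal (f r \<theta>) * indicator (sph_dom CARD('n)) (r, \<theta>)
      * indicator {x. s + (1 / X) *\<^sub>R x \<in> Om} (sph r \<theta> :: real ^ 'n::{finite,wellorder}) \<partial>lborel)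
    = ray_mass s (sph 1 \<theta>) Om (\<lambda>r. f r \<theta>) X"
    unfolding ray_mass_def using True by (intro nn_integral_cong) (simp add: sph_dom_def indicator_def)
  with True show ?thesis by simp
qed (simp add: sph_dom_def)

context
  fixes f :: "real \<Rightarrow> (nat \<Rightarrow> real) \<Rightarrow> real"
  assumes dim: "CARD('n::{finite,wellorder}) \<ge> 2"
    and f_meas: "(\<lambda>(r, \<theta>). f r \<theta>) \<in> borel_measurable (sph_space CARD('n))"
begin

lemma
  fixes s :: "real ^ 'n::{finite,wellorder}" and Om :: "(real ^ 'n::{finite,wellorder}) set"
  assumes Om: "Om \<in> sets borel"
  shows borel_measurable_ray_mass_sph:
      "(\<lambda>\<theta>. ray_mass s (sph 1 \<theta>) Om (\<lambda>r. f r \<theta>) X * indicator (sph_angles CARD('n)) \<theta>)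
        \<in> borel_measurable (PiM {..<CARD('n) - 1} (\<lambda>_. lborel))"
    and emeasure_noise_distr_polar:
      "emeasure (noise_distr f) {x. s + (1 / X) *\<^sub>R x \<in> Om} =
        (\<integral>\<^sup>+ \<theta>. ray_mass s (sph 1 \<theta>) Om (\<lambda>r. f r \<theta>) X * indicator (sph_angles CARD('n)) \<theta>
          \<partial>PiM {..<CARD('n) - 1} (\<lambda>_. lborel))"
proof -
  let ?n = "CARD('n::{finite,wellorder})"
  let ?A = "PiM {..<?n - 1} (\<lambda>_. lborel :: real measure)"
  let ?E = "{x. s + (1 / X) *\<^sub>R x \<in> Om}"
  interpret P: pair_sigma_finite lborel ?A by (simp add: pair_sigma_finite_lborel_PiM)
  have "(\<lambda>x. s + (1 / X) *\<^sub>R x) \<in> borel_measurable borel" by measurable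
  from measurable_sets[OF this Om] have E: "?E \<in> sets borel" by (simp add: vimage_def)
  let ?F = "\<lambda>(r, \<theta>). ennreal (f r \<theta>) * indicator (sph_dom ?n) (r, \<theta>)
      * indicator ?E (sph r \<theta> :: real ^ 'n::{finite,wellorder})"
  have F: "?F \<in> borel_measurable (lborel \<Otimes>\<^sub>M ?A)"
    using borel_measurable_noise_integrand[OF dim f_meas E] by (simp add: sph_space_def)
  show "(\<lambda>\<theta>. ray_mass s (sph 1 \<theta>) Om (\<lambda>r. f r \<theta>) X * indicator (sph_angles ?n) \<theta>)
      \<in> borel_measurable ?A"
    using lborel.borel_measurable_nn_integral_fst[OF measurable_pair_swap[OF F]]
    by (simp add: nn_integral_noise_integrand_radial)
  have "emeasure (noise_distr f) ?E = integral\<^sup>N (lborel \<Otimes>\<^sub>M ?A) ?F"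
    using emeasure_noise_distr[OF dim f_meas E] by (simp add: sph_space_def)
  also have "\<dots> = (\<integral>\<^sup>+ \<theta>. (\<integral>\<^sup>+ r. ?F (r, \<theta>) \<partial>lborel) \<partial>?A)"
    using F by (rule P.nn_integral_snd[symmetric])
  finally show "emeasure (noise_distr f) ?E = (\<integral>\<^sup>+ \<theta>. ray_mass s (sph 1 \<theta>) Om (\<lambda>r. f r \<theta>) X
      * indicator (sph_angles ?n) \<theta> \<partial>?A)"
    by (simp add: nn_integral_noise_integrand_radial)
qed

lemma emeasure_noise_distr_three_point:
  fixes s :: "real ^ 'n::{finite,wellorder}" and Om :: "(real ^ 'n::{finite,wellorder}) set"
    and f' :: "real \<Rightarrow> (nat \<Rightarrow> real) \<Rightarrow> real" and dmin dmax :: ereal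
  assumes Om: "Om \<in> sets borel" and cc: "center_convex s Om"
    and f_diff: "\<forall>\<theta> \<in> sph_angles CARD('n). \<forall>r > 0. ((\<lambda>\<rho>. f \<rho> \<theta>) has_real_derivative f' r \<theta>) (at r)"
    and f_decr: "\<forall>\<theta> \<in> sph_angles CARD('n). \<forall>r > 0.
      ereal La * dmin \<le> ereal r \<and> ereal r \<le> ereal Ua * dmax \<longrightarrow> f' r \<theta> \<le> 0"
    and fr: "\<And>b. b \<in> frontier Om \<Longrightarrow> dmin \<le> ereal (dist s b) \<and> ereal (dist s b) \<le> dmax"
    and ABC: "0 < La" "La \<le> A" "A < B" "B < C" "C \<le> Ua"
  shows "ennreal (C - B) * emeasure (noise_distr f) {x. s + (1 / A) *\<^sub>R x \<in> Om}
      + ennreal (B - A) * emeasure (noise_distr f) {x. s + (1 / C) *\<^sub>R x \<in> Om}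
    \<le> ennreal (C - A) * emeasure (noise_distr f) {x. s + (1 / B) *\<^sub>R x \<in> Om}"
proof -
  let ?n = "CARD('n::{finite,wellorder})"
  let ?A = "PiM {..<?n - 1} (\<lambda>_. lborel :: real measure)"
  let ?g = "\<lambda>X \<theta>. ray_mass s (sph 1 \<theta>) Om (\<lambda>r. f r \<theta>) X * indicator (sph_angles ?n) \<theta>"
  have g: "?g X \<in> borel_measurable ?A" for X by (rule borel_measurable_ray_mass_sph[OF Om])
  have "ennreal (C - B) * ?g A \<theta> + ennreal (B - A) * ?g C \<theta> \<le> ennreal (C - A) * ?g B \<theta>" for \<theta>
  proof (cases "\<theta> \<in> sph_angles ?n")
    case True
    have "\<theta> \<in> space ?A" using sets.sets_into_space[OF sets_sph_angles[OF dim]] True by blast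
    then have "(\<lambda>r. f r \<theta>) \<in> borel_measurable lborel"
      using measurable_compose[OF measurable_Pair2' f_meas[unfolded sph_space_def]] by simp
    moreover have "antimono_on {La * R..Ua * R} (\<lambda>r. f r \<theta>)"
      if "0 < R" "s + R *\<^sub>R sph 1 \<theta> \<in> frontier Om" for R
    proof (rule antimono_on_scaled_Icc)
      have "dist s (s + R *\<^sub>R sph 1 \<theta>) = R" using norm_sph_1[OF dim] \<open>0 < R\<close> by (simp add: dist_norm)
      then show "dmin \<le> ereal R" "ereal R \<le> dmax" using fr[OF that(2)] by auto
    qed (use f_diff f_decr True that ABC in auto)
    ultimately have "ennreal (C - B) * ray_mass s (sph 1 \<theta>) Om (\<lambda>r. f r \<theta>) A
        + ennreal (B - A) * ray_mass s (sph 1 \<theta>) Om (\<lambda>r. f r \<theta>) C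
        \<le> ennreal (C - A) * ray_mass s (sph 1 \<theta>) Om (\<lambda>r. f r \<theta>) B"
      by (rule ray_mass_three_point[OF norm_sph_1[OF dim] cc _ _ ABC])
    then show ?thesis using True by simp
  qed simp
  then have "(\<integral>\<^sup>+ \<theta>. ennreal (C - B) * ?g A \<theta> + ennreal (B - A) * ?g C \<theta> \<partial>?A)
      \<le> (\<integral>\<^sup>+ \<theta>. ennreal (C - A) * ?g B \<theta> \<partial>?A)"
    by (intro nn_integral_mono)
  then show ?thesis
    using g by (simp add: emeasure_noise_distr_polar[OF Om] nn_integral_add nn_integral_cmult)
qed

lemma concave_on_noise_distr_hit:
  fixes s :: "real ^ 'n::{finite,wellorder}" and Om :: "(real ^ 'n::{finite,wellorder}) set"
    and f' :: "real \<Rightarrow> (nat \<Rightarrow> real) \<Rightarrow> real" and dmin dmax :: ereal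
  assumes prob: "prob_space (noise_distr f :: (real ^ 'n::{finite,wellorder}) measure)"
    and Om: "Om \<in> sets borel" and cc: "center_convex s Om"
    and f_diff: "\<forall>\<theta> \<in> sph_angles CARD('n). \<forall>r > 0. ((\<lambda>\<rho>. f \<rho> \<theta>) has_real_derivative f' r \<theta>) (at r)"
    and f_decr: "\<forall>\<theta> \<in> sph_angles CARD('n). \<forall>r > 0.
      ereal La * dmin \<le> ereal r \<and> ereal r \<le> ereal Ua * dmax \<longrightarrow> f' r \<theta> \<le> 0"
    and fr: "\<And>b. b \<in> frontier Om \<Longrightarrow> dmin \<le> ereal (dist s b) \<and> ereal (dist s b) \<le> dmax"
    and "0 < La"
  shows "concave_on {La..Ua} (\<lambda>X. measure (noise_distr f) {x. s + (1 / X) *\<^sub>R x \<in> Om})"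
proof (rule concave_on_Icc_three_pointI)
  interpret prob_space "noise_distr f :: (real ^ 'n::{finite,wellorder}) measure" by (rule prob)
  fix x y z :: real
  assume xyz: "La \<le> x" "x < y" "y < z" "z \<le> Ua"
  let ?m = "\<lambda>X. measure (noise_distr f) {v. s + (1 / X) *\<^sub>R v \<in> Om}"
  have "ennreal (z - y) * ennreal (?m x) + ennreal (y - x) * ennreal (?m z) \<le> ennreal (z - x) * ennreal (?m y)"
    using emeasure_noise_distr_three_point[OF Om cc f_diff f_decr fr \<open>0 < La\<close> xyz]
    by (simp add: emeasure_eq_measure)
  then have "ennreal ((z - y) * ?m x) + ennreal ((y - x) * ?m z) \<le> ennreal ((z - x) * ?m y)"
    using xyz by (simp add: ennreal_mult)
  moreover have "0 \<le> (z - y) * ?m x" "0 \<le> (y - x) * ?m z" "0 \<le> (z - x) * ?m y"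
    using xyz by simp_all
  ultimately show "(z - y) * ?m x + (y - x) * ?m z \<le> (z - x) * ?m y"
    by (simp flip: ennreal_plus)
qed

end

lemma frontier_dist_d_min_d_max:
  assumes "k < M" "b \<in> frontier (Om k)"
  shows "d_min M s Om \<le> ereal (dist (s k) b) \<and> ereal (dist (s k) b) \<le> d_max M s Om"
proof
  have "d_min M s Om \<le> ereal (infdist (s k) (frontier (Om k)))"
    unfolding d_min_def using assms by (intro INF_lower) auto
  also have "\<dots> \<le> ereal (dist (s k) b)" using infdist_le[OF assms(2)] by simp
  finally show "d_min M s Om \<le> ereal (dist (s k) b)" .
  have "ereal (dist (s k) b) \<le> (SUP b\<in>frontier (Om k). ereal (dist (s k) b))"
    using assms(2) by (rule SUP_upper)
  also have "\<dots> \<le> d_max M s Om" unfolding d_max_def using assms(1) by (intro SUP_upper) auto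
  finally show "ereal (dist (s k) b) \<le> d_max M s Om" .
qed

theorem theorem7:
  fixes M :: nat
    and p :: "nat \<Rightarrow> real"
    and s :: "nat \<Rightarrow> real ^ 'n::{finite,wellorder}"
    and Om :: "nat \<Rightarrow> (real ^ 'n::{finite,wellorder}) set"
    and f f' :: "real \<Rightarrow> (nat \<Rightarrow> real) \<Rightarrow> real"
    and A1 A2 :: real
  assumes dim: "card (UNIV :: 'n::{finite,wellorder} set) \<ge> 2"
    and M_pos: "M \<ge> 1"
    and priors_nonneg: "\<forall>k<M. p k \<ge> 0"
    and priors_sum: "(\<Sum>k<M. p k) = 1"
    and regions_meas: "\<forall>k<M. Om k \<in> sets borel"
    and regions_disj: "\<forall>k<M. \<forall>j<M. k \<noteq> j \<longrightarrow> Om k \<inter> Om j = {}"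
    and center_cvx: "\<forall>k<M. center_convex (s k) (Om k)"
    and f_meas: "(\<lambda>(r, \<theta>). f r \<theta>) \<in> borel_measurable (sph_space (card (UNIV :: 'n::{finite,wellorder} set)))"
    and f_nonneg: "\<forall>(r, \<theta>) \<in> sph_dom (card (UNIV :: 'n::{finite,wellorder} set)). f r \<theta> \<ge> 0"
    and f_normalized: "(\<integral>\<^sup>+ (r, \<theta>). ennreal (f r \<theta>) * indicator (sph_dom (card (UNIV :: 'n::{finite,wellorder} set))) (r, \<theta>)
                          \<partial>sph_space (card (UNIV :: 'n::{finite,wellorder} set))) = 1"
    and f_diff: "\<forall>\<theta> \<in> sph_angles (card (UNIV :: 'n::{finite,wellorder} set)). \<forall>r > 0.
                   ((\<lambda>\<rho>. f \<rho> \<theta>) has_real_derivative f' r \<theta>) (at r)"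
    and A_pos: "0 < A1" and A_lt: "A1 < A2"
    and f_decr: "\<forall>\<theta> \<in> sph_angles (card (UNIV :: 'n::{finite,wellorder} set)). \<forall>r > 0.
                   ereal A1 * d_min M s Om \<le> ereal r \<and> ereal r \<le> ereal A2 * d_max M s Om
                   \<longrightarrow> f' r \<theta> \<le> 0"
  shows "\<forall>A \<in> {A1..A2}. \<forall>P1 D.
           (\<forall>\<^sub>F x in nhds A.
              (sym_err_rate M p s Om (noise_distr f) has_real_derivative P1 x) (at x))
           \<longrightarrow> (P1 has_real_derivative D) (at A)
           \<longrightarrow> D \<ge> 0"
proof (intro ballI allI impI)
  fix A P1 D
  assume A: "A \<in> {A1..A2}"
    and P1: "\<forall>\<^sub>F x in nhds A. (sym_err_rate M p s Om (noise_distr f) has_real_derivative P1 x) (at x)"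
    and D: "(P1 has_real_derivative D) (at A)"
  let ?N = "noise_distr f :: (real ^ 'n::{finite,wellorder}) measure"
  let ?m = "\<lambda>k X. measure ?N {x. s k + (1 / X) *\<^sub>R x \<in> Om k}"
  have prob: "prob_space ?N" using prob_space_noise_distr[OF dim f_meas f_normalized] .
  have "concave_on {A1..A2} (?m k)" if "k < M" for k
  proof (rule concave_on_noise_distr_hit[OF dim f_meas prob _ _ f_diff f_decr _ A_pos])
    show "Om k \<in> sets borel" "center_convex (s k) (Om k)"
      using regions_meas center_cvx \<open>k < M\<close> by blast+
  qed (rule frontier_dist_d_min_d_max[OF \<open>k < M\<close>])
  then have "concave_on {A1..A2} (\<lambda>X. \<Sum>k<M. p k * ?m k X)"
    using priors_nonneg by (intro concave_on_sum_weighted) auto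
  then have "convex_on {A1..A2} (\<lambda>X. (\<Sum>k<M. p k) - (\<Sum>k<M. p k * ?m k X))"
    by (intro convex_on_diff) (simp_all add: convex_on_const)
  moreover have "space ?N = UNIV" by (simp add: noise_distr_def)
  then have "sym_err_rate M p s Om ?N = (\<lambda>X. (\<Sum>k<M. p k) - (\<Sum>k<M. p k * ?m k X))"
    unfolding sym_err_rate_def by (simp add: right_diff_distrib sum_subtractf)
  ultimately have "convex_on {A1..A2} (sym_err_rate M p s Om ?N)" by simp
  then show "0 \<le> D" by (rule convex_on_second_deriv_nonneg[OF _ A_lt A P1 D])
qed

end
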